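(* Let $p=p_1p_2\cdots p_n$ be a permutation avoiding the pattern $1324$, and let $w(p)$ and $z(p)$ be the two words of length $n$ over $\{A,B,C,D\}$ defined in the context. Then for all $i\geq 1$ and all $k\geq 1$: if the $i$th letter $A$ from the right in $w(p)$ is in the middle of a $CAB^k$-factor (i.e., it is immediately preceded by a letter $C$ and immediately followed by $k$ consecutive letters $B$), then the $i$th segment of $z(p)$ from the left contains at least $k$ letters $B$.
   Context: A permutation $p$ avoids $1324$ if there are no indices $i_1<i_2<i_3<i_4$ with $p_{i_1}<p_{i_3}<p_{i_2}<p_{i_4}$. An entry $p_i$ is a left-to-right minimum if it is smaller than all entries to its left, and a right-to-left maximum if it is larger than all entries to its right (these notions are also applied to subsequences). Coloring: scan $p$ from left to right; color $p_i$ blue if coloring it red would create a $132$-pattern consisting entirely of red entries (among the previously colored red entries together with $p_i$); otherwise color $p_i$ red. Then mark each entry with a letter: (1) a red entry that is a left-to-right minimum of the subsequence of red entries gets $A$; (2) a red entry that is not such a left-to-right minimum gets $B$; (3) a blue entry that is not a right-to-left maximum of the subsequence of blue entries gets $C$; (4) a blue entry that is a right-to-left maximum of the subsequence of blue entries gets $D$; (4') finally, every entry that is a right-to-left maximum of all of $p$ but not a left-to-right minimum of $p$ is colored blue and marked $D$, regardless of the earlier rules. The word $w(p)$ has as its $i$th letter the letter of $p_i$; the word $z(p)$ has as its $i$th letter the letter of the entry of value $i$. A segment of a word $v$ over $\{A,B,C,D\}$ is a factor (consecutive letters) that starts with a letter $A$ and ends immediately before the next letter $A$, or at the end of $v$.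 The $i$th segment from the left is the one starting at the $i$th letter $A$ from the left. *)

theory Defs
  imports Main
begin

text \<open>Permutations of [n] are lists p with positions 0..n-1 and values 1..n.\<close>

definition is_perm :: "nat list \<Rightarrow> bool" where
  "is_perm p \<longleftrightarrow> distinct p \<and> set p = {1..length p}"

definition avoids1324 :: "nat list \<Rightarrow> bool" where
  "avoids1324 p \<longleftrightarrow> \<not> (\<exists>a b c d. a < b \<and> b < c \<and> c < d \<and> d < length p \<and>
      p!a < p!c \<and> p!c < p!b \<and> p!b < p!d)"

definition has132 :: "nat list \<Rightarrow> bool" where
  "has132 xs \<longleftrightarrow> (\<exists>a b c. a < b \<and> b < c \<and> c < length xs \<and>
      xs!a < xs!c \<and> xs!c < xs!b)"

text \<open>Colouring scan: the first argument is the list of entries coloured red so far.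
  Result: one Boolean per entry, True = red, False = blue.\<close>
fun red_scan :: "nat list \<Rightarrow> nat list \<Rightarrow> bool list" where
  "red_scan R [] = []"
| "red_scan R (x # xs) =
     (if has132 (R @ [x]) then False # red_scan R xs
      else True # red_scan (R @ [x]) xs)"

definition is_red :: "nat list \<Rightarrow> nat \<Rightarrow> bool" where
  "is_red p i = red_scan [] p ! i"

definition lr_min :: "nat list \<Rightarrow> nat \<Rightarrow> bool" where
  "lr_min p i \<longleftrightarrow> (\<forall>j<i. p!i < p!j)"

definition rl_max :: "nat list \<Rightarrow> nat \<Rightarrow> bool" where
  "rl_max p i \<longleftrightarrow> (\<forall>j. i < j \<and> j < length p \<longrightarrow> p!j < p!i)"

datatype letter = A | B | C | D

definition letter_at :: "nat list \<Rightarrow> nat \<Rightarrow> letter" where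
  "letter_at p i =
     (if rl_max p i \<and> \<not> lr_min p i then D
      else if is_red p i then
        (if (\<forall>j<i. is_red p j \<longrightarrow> p!i < p!j) then A else B)
      else
        (if (\<forall>j. i < j \<and> j < length p \<and> \<not> is_red p j \<longrightarrow> p!j < p!i) then D else C))"

definition w_word :: "nat list \<Rightarrow> letter list" where
  "w_word p = map (letter_at p) [0..<length p]"

definition z_word :: "nat list \<Rightarrow> letter list" where
  "z_word p = map (\<lambda>v. letter_at p (THE j. j < length p \<and> p!j = v)) [1..<length p + 1]"

definition A_positions :: "letter list \<Rightarrow> nat list" where
  "A_positions v = filter (\<lambda>j. v!j = A) [0..<length v]"

definition segment :: "letter list \<Rightarrow> nat \<Rightarrow> letter list" where
  "segment v i =
     (let ps = A_positions v; s = ps ! (i - 1);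
          e = (if i < length ps then ps ! i else length v)
      in take (e - s) (drop s v))"

definition ith_A_from_right :: "letter list \<Rightarrow> nat \<Rightarrow> nat" where
  "ith_A_from_right v i = A_positions v ! (length (A_positions v) - i)"

definition in_CABk :: "letter list \<Rightarrow> nat \<Rightarrow> nat \<Rightarrow> bool" where
  "in_CABk v q k \<longleftrightarrow> 1 \<le> q \<and> q + k < length v \<and> v!(q-1) = C \<and> v!q = A \<and>
      (\<forall>t. 1 \<le> t \<and> t \<le> k \<longrightarrow> v!(q+t) = B)"

end

theory Submission
  imports Defs
begin

text \<open>Red entries form a 132-avoiding subsequence and every blue entry is the middle value
  of a red 13-pattern to its left; together with 1324-avoidance this makes every red entry
  after a blue one smaller than it. The letters A of w(p) mark exactly the left-to-right minima,
  whose values decrease, so in z(p) the i-th A from the left belongs to the i-th left-to-right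
  minimum q from the right, and the i-th segment of z(p) holds the letters of the entries with
  values in [p q, p q'), q' being the previous left-to-right minimum. In a factor C A B^k at q,
  each B-entry exceeds p q because no left-to-right minimum lies in between. It is red and lies
  after the blue C-entry, hence below it; as the C-entry is followed by a larger blue entry, a
  B-entry above p q' would complete a 1324 with q'. So all k letters B fall into the i-th segment
  of z(p).\<close>

lemma red_scan_length [simp]: "length (red_scan R xs) = length xs"
  by (induction xs arbitrary: R) auto

lemma red_scan_nth:
  "j < length xs \<Longrightarrow> red_scan R xs ! j =
     (\<not> has132 (R @ map fst (filter snd (zip (take j xs) (red_scan R xs))) @ [xs!j]))"
proof (induction xs arbitrary: R j)
  case (Cons x xs)
  show ?case
  proof (cases j)
    case (Suc j')
    then show ?thesis
      using Cons by (cases "has132 (R @ [x])") simp_all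
  qed simp
qed simp

lemma is_red_iff_prefix:
  assumes "j < length p"
  shows "is_red p j \<longleftrightarrow> \<not> has132 (map (nth p) (filter (is_red p) [0..<j] @ [j]))"
proof -
  have "zip (take j p) (red_scan [] p) = map (\<lambda>i. (p!i, red_scan [] p ! i)) [0..<j]"
    using assms by (simp add: list_eq_iff_nth_eq)
  then show ?thesis
    using red_scan_nth[OF assms, of "[]"] unfolding is_red_def by (simp add: filter_map comp_def)
qed

lemma has132_map_sorted:
  fixes ks :: "nat list" and f :: "nat \<Rightarrow> nat"
  assumes "sorted_wrt (<) ks"
  shows "has132 (map f ks) \<longleftrightarrow>
    (\<exists>a\<in>set ks. \<exists>b\<in>set ks. \<exists>c\<in>set ks. a < b \<and> b < c \<and> f a < f c \<and> f c < f b)"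
proof
  assume "has132 (map f ks)"
  then obtain a b c where abc: "a < b" "b < c" "c < length ks"
      "f (ks!a) < f (ks!c)" "f (ks!c) < f (ks!b)"
    by (auto simp: has132_def)
  moreover have "ks!a < ks!b" "ks!b < ks!c"
    using assms abc by (auto simp: sorted_wrt_iff_nth_less)
  moreover have "ks!a \<in> set ks" "ks!b \<in> set ks" "ks!c \<in> set ks"
    using abc by simp_all
  ultimately show "\<exists>a\<in>set ks. \<exists>b\<in>set ks. \<exists>c\<in>set ks. a < b \<and> b < c \<and> f a < f c \<and> f c < f b"
    by blast
next
  assume "\<exists>a\<in>set ks. \<exists>b\<in>set ks. \<exists>c\<in>set ks. a < b \<and> b < c \<and> f a < f c \<and> f c < f b"
  then obtain ia ib ic where idx: "ia < length ks" "ib < length ks" "ic < length ks"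
      "ks!ia < ks!ib" "ks!ib < ks!ic" "f (ks!ia) < f (ks!ic)" "f (ks!ic) < f (ks!ib)"
    by (metis in_set_conv_nth)
  have mono: "x < y" if "x < length ks" "y < length ks" "ks!x < ks!y" for x y
  proof (rule ccontr)
    assume "\<not> x < y"
    with \<open>ks!x < ks!y\<close> have "y < x"
      by (cases "x = y") auto
    then have "ks!y < ks!x"
      using that(1) assms by (simp add: sorted_wrt_iff_nth_less)
    with \<open>ks!x < ks!y\<close> show False by simp
  qed
  show "has132 (map f ks)"
    unfolding has132_def using idx mono[of ia ib] mono[of ib ic]
    by (intro exI[of _ ia] exI[of _ ib] exI[of _ ic]) auto
qed

lemma is_red_iff:
  assumes "j < length p"
  shows "is_red p j \<longleftrightarrow> \<not> (\<exists>a b c. a < b \<and> b < c \<and> c \<le> j \<and>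
      is_red p a \<and> is_red p b \<and> (c = j \<or> is_red p c) \<and> p!a < p!c \<and> p!c < p!b)"
    (is "_ \<longleftrightarrow> \<not> (\<exists>a b c. ?pat a b c)")
proof -
  let ?ks = "filter (is_red p) [0..<j] @ [j]"
  have mem: "x \<in> set ?ks \<longleftrightarrow> x < j \<and> is_red p x \<or> x = j" for x
    by auto
  have "sorted_wrt (<) ?ks"
    by (auto simp: sorted_wrt_append sorted_wrt_filter)
  moreover have "(\<exists>a\<in>set ?ks. \<exists>b\<in>set ?ks. \<exists>c\<in>set ?ks.
      a < b \<and> b < c \<and> p!a < p!c \<and> p!c < p!b) \<longleftrightarrow> (\<exists>a b c. ?pat a b c)"
  proof
    assume "\<exists>a\<in>set ?ks. \<exists>b\<in>set ?ks. \<exists>c\<in>set ?ks. a < b \<and> b < c \<and> p!a < p!c \<and> p!c < p!b"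
    then obtain a b c where "a \<in> set ?ks" "b \<in> set ?ks" "c \<in> set ?ks"
        "a < b" "b < c" "p!a < p!c" "p!c < p!b"
      by blast
    then have "?pat a b c"
      unfolding mem by auto
    then show "\<exists>a b c. ?pat a b c" by blast
  next
    assume "\<exists>a b c. ?pat a b c"
    then obtain a b c where "?pat a b c" by blast
    then have "a \<in> set ?ks \<and> b \<in> set ?ks \<and> c \<in> set ?ks \<and>
        a < b \<and> b < c \<and> p!a < p!c \<and> p!c < p!b"
      unfolding mem by auto
    then show "\<exists>a\<in>set ?ks. \<exists>b\<in>set ?ks. \<exists>c\<in>set ?ks.
        a < b \<and> b < c \<and> p!a < p!c \<and> p!c < p!b" by blast
  qed
  ultimately show ?thesis
    using is_red_iff_prefix[OF assms] has132_map_sorted[of ?ks "nth p"] by simp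
qed

lemma red_avoids_132:
  assumes "a < b" "b < c" "c < length p" "is_red p a" "is_red p b" "is_red p c"
  shows "\<not> (p!a < p!c \<and> p!c < p!b)"
  using assms is_red_iff[OF assms(3)] by blast

lemma not_red_obtains_red_13:
  assumes "j < length p" "\<not> is_red p j"
  obtains a b where "a < b" "b < j" "is_red p a" "is_red p b" "p!a < p!j" "p!j < p!b"
proof -
  obtain a b c where abc: "a < b" "b < c" "c \<le> j" "is_red p a" "is_red p b"
      "c = j \<or> is_red p c" "p!a < p!c" "p!c < p!b"
    using assms is_red_iff by blast
  have "c = j"
    using abc red_avoids_132[of a b c p] assms(1) by fastforce
  with abc show thesis using that by blast
qed

lemma lr_min_is_red:
  assumes "j < length p" "lr_min p j"
  shows "is_red p j"
  using assms not_red_obtains_red_13[of j p] unfolding lr_min_def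
  by (metis order.asym order.strict_trans)

lemma letter_at_A_iff_lr_min:
  assumes "j < length p"
  shows "letter_at p j = A \<longleftrightarrow> lr_min p j"
proof
  assume "letter_at p j = A"
  then have below_red: "\<forall>i<j. is_red p i \<longrightarrow> p!j < p!i"
    unfolding letter_at_def by (simp split: if_splits)
  show "lr_min p j"
    unfolding lr_min_def
  proof (intro allI impI)
    fix i assume "i < j"
    show "p!j < p!i"
    proof (cases "is_red p i")
      case False
      then obtain a where "a < i" "is_red p a" "p!a < p!i"
        using not_red_obtains_red_13[of i p] \<open>i < j\<close> assms by (metis order.strict_trans)
      moreover have "p!j < p!a"
        using below_red \<open>a < i\<close> \<open>i < j\<close> \<open>is_red p a\<close> by simp
      ultimately show ?thesis by simp
    qed (use below_red \<open>i < j\<close> in blast)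
  qed
next
  assume "lr_min p j"
  then show "letter_at p j = A"
    using lr_min_is_red[OF assms] unfolding letter_at_def lr_min_def by simp
qed

lemma letter_at_B_imp_red: "letter_at p j = B \<Longrightarrow> is_red p j"
  unfolding letter_at_def by (simp split: if_splits)

lemma letter_at_C_obtains:
  assumes "letter_at p j = C"
  obtains l where "\<not> is_red p j" "j < l" "l < length p" "\<not> is_red p l" "p!j \<le> p!l"
  using assms unfolding letter_at_def by (auto split: if_splits simp: not_less)

lemma red_after_blue_below:
  assumes "distinct p" "avoids1324 p" "c < x" "x < length p" "\<not> is_red p c" "is_red p x"
  shows "p!x < p!c"
proof -
  have "c < length p"
    using assms(3,4) by simp
  then obtain a b where ab: "a < b" "b < c" "is_red p a" "is_red p b" "p!a < p!c" "p!c < p!b"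
    using not_red_obtains_red_13 assms(5) by blast
  have "b < x"
    using ab(2) assms(3) by simp
  have neq: "p!x \<noteq> p!c" "p!x \<noteq> p!b"
    using assms(1,3,4) \<open>b < x\<close> by (simp_all add: nth_eq_iff_index_eq)
  have "\<not> p!b < p!x"
    using assms(2,3,4) ab(1,2,5,6) unfolding avoids1324_def by blast
  moreover have "\<not> (p!a < p!x \<and> p!x < p!b)"
    using red_avoids_132[OF ab(1) \<open>b < x\<close> assms(4) ab(3,4) assms(6)] .
  ultimately show ?thesis
    using neq ab(5,6) by linarith
qed

lemma red_after_C_below_prefix:
  assumes "distinct p" "avoids1324 p" "letter_at p c = C" "c < x" "x < length p"
    and red: "\<And>y. c < y \<Longrightarrow> y \<le> x \<Longrightarrow> is_red p y"
    and "j < c"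
  shows "p!x < p!j"
proof (rule ccontr)
  assume "\<not> p!x < p!j"
  moreover have "p!j \<noteq> p!x"
    using assms(1,4,5,7) by (simp add: nth_eq_iff_index_eq)
  ultimately have "p!j < p!x" by simp
  obtain l where l: "\<not> is_red p c" "c < l" "l < length p" "\<not> is_red p l" "p!c \<le> p!l"
    using letter_at_C_obtains[OF assms(3)] .
  have "x < l"
    using red[of l] l(2,4) by (meson not_le)
  have "p!x < p!c"
    using red_after_blue_below[OF assms(1,2,4,5) l(1)] red assms(4) by simp
  moreover have "p!c < p!l"
    using l(2,3,5) assms(1) by (simp add: nth_eq_iff_index_eq order_le_neq_trans)
  ultimately show False
    using assms(2,4,7) \<open>p!j < p!x\<close> \<open>x < l\<close> l(3) unfolding avoids1324_def by blast
qed

lemma lr_min_less_until_next: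
  assumes "distinct p" "lr_min p q" "q < x" "x < length p"
    and "\<And>y. q < y \<Longrightarrow> y \<le> x \<Longrightarrow> \<not> lr_min p y"
  shows "p!q < p!x"
  using assms(3-5)
proof (induction x rule: less_induct)
  case (less x)
  then obtain i where "i < x" "p!i \<le> p!x"
    unfolding lr_min_def by (auto simp: not_less)
  moreover have "p!i \<noteq> p!x"
    using assms(1) \<open>i < x\<close> less.prems(2) by (simp add: nth_eq_iff_index_eq)
  moreover have "p!q \<le> p!i"
  proof (cases i q rule: linorder_cases)
    case less
    then show ?thesis
      using assms(2) unfolding lr_min_def by (simp add: less_imp_le)
  next
    case greater
    then have "p!q < p!i"
      using less.IH less.prems \<open>i < x\<close> by simp
    then show ?thesis by simp
  qed simp
  ultimately show ?case by simp
qed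

lemma length_w_word [simp]: "length (w_word p) = length p"
  by (simp add: w_word_def)

lemma nth_w_word [simp]: "j < length p \<Longrightarrow> w_word p ! j = letter_at p j"
  by (simp add: w_word_def)

lemma CABk_run_between_lr_mins:
  assumes "distinct p" "avoids1324 p" "in_CABk (w_word p) q k"
    and "q' < q" "lr_min p q'" "q < j" "j \<le> q + k"
  shows "letter_at p j = B \<and> p!q < p!j \<and> p!j < p!q'"
proof -
  have q: "1 \<le> q" "q + k < length p" "letter_at p (q-1) = C" "letter_at p q = A"
    using assms(3) unfolding in_CABk_def by auto
  have run: "letter_at p y = B" if "q < y" "y \<le> q + k" for y
  proof -
    have "w_word p ! (q + (y - q)) = B"
      using assms(3) that unfolding in_CABk_def by (auto dest!: spec[of _ "y - q"])
    with that q(2) show ?thesis by simp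
  qed
  have "lr_min p q"
    using q(2,4) letter_at_A_iff_lr_min by simp
  obtain l where "\<not> is_red p (q-1)"
    using letter_at_C_obtains[OF q(3)] .
  moreover have "is_red p q'"
    using lr_min_is_red[OF _ assms(5)] \<open>q' < q\<close> q(2) by simp
  ultimately have "q' < q - 1"
    using \<open>q' < q\<close> by (cases "q' = q - 1") auto
  have "is_red p y" if "q - 1 < y" "y \<le> j" for y
  proof (cases "y = q")
    case True
    then show ?thesis
      using lr_min_is_red \<open>lr_min p q\<close> q(2) by simp
  next
    case False
    with that(1) q(1) have "q < y" by linarith
    then show ?thesis
      using run letter_at_B_imp_red that(2) assms(7) by simp
  qed
  then have "p!j < p!q'"
    using red_after_C_below_prefix[OF assms(1,2) q(3)] \<open>q' < q - 1\<close> assms(6,7) q(2) by simp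
  moreover have "p!q < p!j"
  proof (rule lr_min_less_until_next[OF assms(1) \<open>lr_min p q\<close> assms(6)])
    show "\<not> lr_min p y" if "q < y" "y \<le> j" for y
      using run[of y] letter_at_A_iff_lr_min[of y p] that assms(7) q(2) by simp
  qed (use assms(7) q(2) in simp)
  ultimately show ?thesis
    using run assms(6,7) by simp
qed

lemma sorted_A_positions: "sorted_wrt (<) (A_positions v)"
  by (simp add: A_positions_def sorted_wrt_filter)

lemma set_A_positions: "set (A_positions v) = {j. j < length v \<and> v!j = A}"
  by (auto simp: A_positions_def)

lemma ith_A_from_right_Suc_less:
  assumes "1 \<le> i" "i < length (A_positions v)"
  shows "ith_A_from_right v (Suc i) < ith_A_from_right v i"
  unfolding ith_A_from_right_def
  using assms by (intro sorted_wrt_nth_less[OF sorted_A_positions]) auto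

lemma length_filter_take_drop:
  assumes "s \<le> e" "e \<le> length v"
  shows "length (filter P (take (e - s) (drop s v))) = card {u. s \<le> u \<and> u < e \<and> P (v!u)}"
proof -
  have "{u. s \<le> u \<and> u < e \<and> P (v!u)} = (\<lambda>u. s + u) ` {u. u < e - s \<and> P (v!(s + u))}"
  proof (rule set_eqI)
    fix u
    show "u \<in> {u. s \<le> u \<and> u < e \<and> P (v!u)} \<longleftrightarrow>
        u \<in> (\<lambda>u. s + u) ` {u. u < e - s \<and> P (v!(s + u))}"
      by (auto simp: image_iff intro!: exI[of _ "u - s"])
  qed
  moreover have "length (filter P (take (e - s) (drop s v))) = card {u. u < e - s \<and> P (v!(s + u))}"
    using assms by (auto simp: length_filter_conv_card intro!: arg_cong[where f = card])
  moreover have "inj_on (\<lambda>u. s + u) A" for A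
    by (simp add: inj_on_def)
  ultimately show ?thesis
    by (simp add: card_image)
qed

lemma length_filter_segment:
  assumes "1 \<le> i" "i < length (A_positions v)"
  shows "length (filter P (segment v i)) =
    card {u. A_positions v ! (i-1) \<le> u \<and> u < A_positions v ! i \<and> P (v!u)}"
proof -
  have "A_positions v ! (i-1) < A_positions v ! i"
    using assms by (intro sorted_wrt_nth_less[OF sorted_A_positions]) auto
  moreover have "A_positions v ! i < length v"
    using nth_mem[OF assms(2)] set_A_positions by blast
  ultimately show ?thesis
    using assms by (simp add: segment_def Let_def length_filter_take_drop)
qed

lemma A_positions_w_word: "A_positions (w_word p) = filter (lr_min p) [0..<length p]"
  unfolding A_positions_def by (auto intro!: filter_cong simp: letter_at_A_iff_lr_min)

lemma ith_A_from_right_w_word: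
  assumes "1 \<le> i" "i \<le> length (A_positions (w_word p))"
  shows "ith_A_from_right (w_word p) i < length p \<and> lr_min p (ith_A_from_right (w_word p) i)"
proof -
  have "length (A_positions (w_word p)) - i < length (A_positions (w_word p))"
    using assms by simp
  from nth_mem[OF this] show ?thesis
    unfolding ith_A_from_right_def by (simp add: A_positions_w_word)
qed

lemma CABk_not_leftmost_A:
  assumes "i \<le> length (A_positions (w_word p))"
    and "in_CABk (w_word p) (ith_A_from_right (w_word p) i) k"
  shows "i < length (A_positions (w_word p))"
proof (rule ccontr)
  assume "\<not> i < length (A_positions (w_word p))"
  with assms(1) have i: "i = length (A_positions (w_word p))" by simp
  have "p \<noteq> []"
    using assms(2) unfolding in_CABk_def by auto
  then have "[0..<length p] = 0 # [1..<length p]"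
    by (simp add: upt_conv_Cons)
  moreover have "lr_min p 0"
    by (simp add: lr_min_def)
  ultimately have "ith_A_from_right (w_word p) i = 0"
    by (simp add: i ith_A_from_right_def A_positions_w_word)
  with assms(2) show False
    unfolding in_CABk_def by simp
qed

lemma is_perm_nth_bounds:
  "is_perm p \<Longrightarrow> j < length p \<Longrightarrow> 1 \<le> p!j \<and> p!j \<le> length p"
  unfolding is_perm_def by (metis atLeastAtMost_iff nth_mem)

lemma is_perm_obtain_index:
  assumes "is_perm p" "1 \<le> v" "v \<le> length p"
  obtains j where "j < length p" "p!j = v"
  using assms unfolding is_perm_def by (metis atLeastAtMost_iff in_set_conv_nth)

lemma length_z_word [simp]: "length (z_word p) = length p"
  unfolding z_word_def length_map length_upt by simp

lemma nth_z_word: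
  assumes "is_perm p" "j < length p"
  shows "z_word p ! (p!j - 1) = letter_at p j"
proof -
  have "p!j - 1 < length p" "p!j - 1 + 1 = p!j"
    using is_perm_nth_bounds[OF assms] by auto
  then have "z_word p ! (p!j - 1) = letter_at p (THE j'. j' < length p \<and> p!j' = p!j)"
    by (simp add: z_word_def del: upt_Suc)
  also have "(THE j'. j' < length p \<and> p!j' = p!j) = j"
    using assms unfolding is_perm_def by (auto simp: nth_eq_iff_index_eq)
  finally show ?thesis .
qed

lemma A_positions_z_word:
  assumes "is_perm p"
  shows "A_positions (z_word p) = rev (map (\<lambda>j. p!j - 1) (A_positions (w_word p)))"
proof (rule strict_sorted_equal)
  let ?L = "A_positions (w_word p)"
  note vals = is_perm_nth_bounds[OF assms]
  have L: "j \<in> set ?L \<longleftrightarrow> j < length p \<and> lr_min p j" for j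
    by (simp add: A_positions_w_word)
  show "sorted_wrt (<) (A_positions (z_word p))"
    by (rule sorted_A_positions)
  show "sorted_wrt (<) (rev (map (\<lambda>j. p!j - 1) ?L))"
    unfolding sorted_wrt_rev sorted_wrt_map
  proof (rule sorted_wrt_mono_rel[OF _ sorted_A_positions])
    fix x y assume "x \<in> set ?L" "y \<in> set ?L" "x < y"
    then show "p!y - 1 < p!x - 1"
      using L vals unfolding lr_min_def by (metis diff_less_mono)
  qed
  show "set (A_positions (z_word p)) = set (rev (map (\<lambda>j. p!j - 1) ?L))"
  proof (rule set_eqI)
    fix u
    have "u \<in> set (A_positions (z_word p)) \<longleftrightarrow> u < length p \<and> z_word p ! u = A"
      by (simp add: set_A_positions)
    also have "\<dots> \<longleftrightarrow> (\<exists>j<length p. lr_min p j \<and> u = p!j - 1)"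
    proof
      assume u: "u < length p \<and> z_word p ! u = A"
      then obtain j where "j < length p" "p!j = u + 1"
        using is_perm_obtain_index[OF assms, of "u + 1"] by auto
      then show "\<exists>j<length p. lr_min p j \<and> u = p!j - 1"
        using u nth_z_word[OF assms] letter_at_A_iff_lr_min by fastforce
    next
      assume "\<exists>j<length p. lr_min p j \<and> u = p!j - 1"
      then obtain j where "j < length p" "lr_min p j" "u = p!j - 1" by blast
      then show "u < length p \<and> z_word p ! u = A"
        using vals nth_z_word[OF assms] letter_at_A_iff_lr_min by fastforce
    qed
    finally show "u \<in> set (A_positions (z_word p)) \<longleftrightarrow> u \<in> set (rev (map (\<lambda>j. p!j - 1) ?L))"
      using L by auto
  qed
qed

lemma length_filter_segment_z_word:
  assumes "is_perm p" "1 \<le> i" "i < length (A_positions (w_word p))"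
  shows "length (filter P (segment (z_word p) i)) =
    card {j. j < length p \<and> p ! ith_A_from_right (w_word p) i \<le> p!j \<and>
      p!j < p ! ith_A_from_right (w_word p) (Suc i) \<and> P (letter_at p j)}"
    (is "_ = card ?J")
proof -
  define m where "m = p ! ith_A_from_right (w_word p) i"
  define m' where "m' = p ! ith_A_from_right (w_word p) (Suc i)"
  note vals = is_perm_nth_bounds[OF assms(1)]
  have "1 \<le> m" "m' \<le> length p"
    using vals ith_A_from_right_w_word assms(2,3) unfolding m_def m'_def by auto
  have "A_positions (z_word p) ! (i-1) = m - 1" "A_positions (z_word p) ! i = m' - 1"
    using assms by (simp_all add: A_positions_z_word rev_nth ith_A_from_right_def m_def m'_def
        Suc_diff_le)
  then have "length (filter P (segment (z_word p) i)) =
      card {u. m - 1 \<le> u \<and> u < m' - 1 \<and> P (z_word p ! u)}"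
    using length_filter_segment[of i "z_word p"] assms by (simp add: A_positions_z_word)
  also have "{u. m - 1 \<le> u \<and> u < m' - 1 \<and> P (z_word p ! u)} = (\<lambda>j. p!j - 1) ` ?J"
  proof (rule set_eqI)
    fix u
    show "u \<in> {u. m - 1 \<le> u \<and> u < m' - 1 \<and> P (z_word p ! u)} \<longleftrightarrow> u \<in> (\<lambda>j. p!j - 1) ` ?J"
    proof
      assume u: "u \<in> {u. m - 1 \<le> u \<and> u < m' - 1 \<and> P (z_word p ! u)}"
      then have "u + 1 \<le> length p"
        using \<open>m' \<le> length p\<close> by auto
      then obtain j where "j < length p" "p!j = u + 1"
        using is_perm_obtain_index[OF assms(1), of "u + 1"] by auto
      then show "u \<in> (\<lambda>j. p!j - 1) ` ?J"
        using u nth_z_word[OF assms(1)] \<open>1 \<le> m\<close> unfolding m_def m'_def by force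
    next
      assume "u \<in> (\<lambda>j. p!j - 1) ` ?J"
      then show "u \<in> {u. m - 1 \<le> u \<and> u < m' - 1 \<and> P (z_word p ! u)}"
        using vals nth_z_word[OF assms(1)] unfolding m_def m'_def by force
    qed
  qed
  also have "card ((\<lambda>j. p!j - 1) ` ?J) = card ?J"
  proof (rule card_image, rule inj_onI)
    fix j j' assume "j \<in> ?J" "j' \<in> ?J" "p!j - 1 = p!j' - 1"
    then have "j < length p" "j' < length p" "p!j = p!j'"
      using vals[of j] vals[of j'] by auto
    then show "j = j'"
      using assms(1) unfolding is_perm_def by (simp add: nth_eq_iff_index_eq)
  qed
  finally show ?thesis
    unfolding m_def m'_def .
qed

theorem lemma4p1:
  fixes p :: "nat list" and i k :: nat
  assumes "is_perm p" and "avoids1324 p"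
    and "1 \<le> i" and "1 \<le> k"
    and "i \<le> length (A_positions (w_word p))"
    and "in_CABk (w_word p) (ith_A_from_right (w_word p) i) k"
  shows "k \<le> length (filter (\<lambda>x. x = B) (segment (z_word p) i))"
proof -
  define q where "q = ith_A_from_right (w_word p) i"
  define q' where "q' = ith_A_from_right (w_word p) (Suc i)"
  have CABk: "in_CABk (w_word p) q k"
    using assms(6) by (simp add: q_def)
  have i: "i < length (A_positions (w_word p))"
    using CABk_not_leftmost_A[OF assms(5,6)] .
  have "q' < q" "lr_min p q'"
    using ith_A_from_right_Suc_less[OF assms(3) i] ith_A_from_right_w_word[of "Suc i" p] i
    unfolding q_def q'_def by auto
  have "distinct p"
    using assms(1) by (simp add: is_perm_def)
  let ?J = "{j. j < length p \<and> p!q \<le> p!j \<and> p!j < p!q' \<and> letter_at p j = B}"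
  have "{q+1..q+k} \<subseteq> ?J"
  proof
    fix j assume "j \<in> {q+1..q+k}"
    then show "j \<in> ?J"
      using CABk_run_between_lr_mins[OF \<open>distinct p\<close> assms(2) CABk \<open>q' < q\<close> \<open>lr_min p q'\<close>, of j]
        CABk unfolding in_CABk_def by auto
  qed
  then have "card {q+1..q+k} \<le> card ?J"
    by (rule card_mono[rotated]) simp
  then show ?thesis
    using length_filter_segment_z_word[OF assms(1,3) i] unfolding q_def q'_def by simp
qed

end
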